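(* Let $\mathcal H$ be a complex Hilbert space of finite dimension $d\ge 2$. There is no quasi-probability representation $(\mu,\xi)$ of quantum theory on $\mathcal H$ (over any finite set $\Lambda$) that is non-negative, i.e. such that $\mu_\rho(\lambda)\ge 0$ for all $\rho\in\mathcal D(\mathcal H)$, $\lambda\in\Lambda$ and $\xi_E(\lambda)\in[0,1]$ for all $E\in\mathcal E(\mathcal H)$, $\lambda\in\Lambda$. Equivalently, every quasi-probability representation of quantum theory has negativity in its representation of states or of measurements (or both).
   Context: $\mathcal D(\mathcal H)$ denotes the set of density operators (positive semidefinite, trace one) on $\mathcal H$, $\mathcal E(\mathcal H)$ the set of effects (operators $E$ with $0\le E\le\mathbb 1$). A quasi-probability representation of quantum theory over a finite set $\Lambda$ is a pair of affine maps $\mu:\mathcal D(\mathcal H)\to\mathbb R^\Lambda$, $\rho\mapsto\mu_\rho$, and $\xi:\mathcal E(\mathcal H)\to\mathbb R^\Lambda$, $E\mapsto\xi_E$, such that for all $\rho\in\mathcal D(\mathcal H)$ and $E\in\mathcal E(\mathcal H)$: (a) $\mu_\rho(\lambda)\in\mathbb R$ and $\sum_{\lambda}\mu_\rho(\lambda)=1$; (b) $\xi_E(\lambda)\in\mathbb R$ and $\xi_{\mathbb 1}(\lambda)=1$ for all $\lambda$; (c) $\mathrm{Tr}(\rho E)=\sum_{\lambda\in\Lambda}\mu_\rho(\lambda)\xi_E(\lambda)$. *)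

theory Defs
  imports "HOL-Analysis.Analysis"
begin

text \<open>Operators on the finite-dimensional complex Hilbert space \<open>complex^'n\<close>
  (dimension \<open>CARD('n)\<close>) are represented by matrices \<open>complex^'n^'n\<close>.\<close>

definition adjoint_mat :: "complex^'n^'n \<Rightarrow> complex^'n^'n" where
  "adjoint_mat A = (\<chi> i j. cnj (A $ j $ i))"

definition hermitian_mat :: "complex^'n^'n \<Rightarrow> bool" where
  "hermitian_mat A \<longleftrightarrow> adjoint_mat A = A"

definition qform :: "complex^'n^'n \<Rightarrow> complex^'n \<Rightarrow> complex" where
  "qform A v = (\<Sum>i\<in>UNIV. cnj (v $ i) * (A *v v) $ i)"

definition psd :: "complex^'n^'n \<Rightarrow> bool" where
  "psd A \<longleftrightarrow> hermitian_mat A \<and> (\<forall>v. 0 \<le> Re (qform A v))"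

definition density_ops :: "(complex^'n^'n) set" where
  "density_ops = {\<rho>. psd \<rho> \<and> trace \<rho> = 1}"

definition effects :: "(complex^'n^'n) set" where
  "effects = {E. psd E \<and> psd (mat 1 - E)}"

definition affine_map_on :: "(complex^'n^'n) set \<Rightarrow> (complex^'n^'n \<Rightarrow> 'l \<Rightarrow> real) \<Rightarrow> bool" where
  "affine_map_on S f \<longleftrightarrow>
     (\<forall>A\<in>S. \<forall>B\<in>S. \<forall>t::real. 0 \<le> t \<and> t \<le> 1 \<longrightarrow>
        (\<forall>l. f (t *\<^sub>R A + (1 - t) *\<^sub>R B) l = t * f A l + (1 - t) * f B l))"

definition quasi_prob_rep ::
  "(complex^'n^'n \<Rightarrow> 'l::finite \<Rightarrow> real) \<Rightarrow> (complex^'n^'n \<Rightarrow> 'l \<Rightarrow> real) \<Rightarrow> bool" where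
  "quasi_prob_rep \<mu> \<xi> \<longleftrightarrow>
     affine_map_on density_ops \<mu> \<and> affine_map_on effects \<xi> \<and>
     (\<forall>\<rho>\<in>density_ops. (\<Sum>l\<in>UNIV. \<mu> \<rho> l) = 1) \<and>
     (\<forall>l. \<xi> (mat 1) l = 1) \<and>
     (\<forall>\<rho>\<in>density_ops. \<forall>E\<in>effects.
        trace (\<rho> ** E) = complex_of_real (\<Sum>l\<in>UNIV. \<mu> \<rho> l * \<xi> E l))"

definition nonneg_rep ::
  "(complex^'n^'n \<Rightarrow> 'l::finite \<Rightarrow> real) \<Rightarrow> (complex^'n^'n \<Rightarrow> 'l \<Rightarrow> real) \<Rightarrow> bool" where
  "nonneg_rep \<mu> \<xi> \<longleftrightarrow>
     (\<forall>\<rho>\<in>density_ops. \<forall>l. 0 \<le> \<mu> \<rho> l) \<and>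
     (\<forall>E\<in>effects. \<forall>l. 0 \<le> \<xi> E l \<and> \<xi> E l \<le> 1)"

end

theory Submission
  imports Defs
begin

(* For a real unit vector u the rank-one projector P_u = u u^T is at the same
   time a density operator and an effect, and Tr (P_u P_w) = <u,w>^2.
   In a non-negative representation, Tr (P_u P_u) = 1 forces the response function of the
   effect P_u to equal 1 on the support of the distribution of the state P_u; hence any state
   whose distribution has the same support as that of P_u is accepted by P_u with
   probability 1.  Since Lambda is finite there are only finitely many possible supports,
   whereas the circle t |-> cos t e_a + sin t e_b (with a \<noteq> b, which needs d \<ge> 2) yields
   infinitely many pure states.  Two of them, with parameters s \<noteq> t in (0,1), share a
   support, so cos (s - t)^2 = Tr (P_u(s) P_u(t)) = 1, impossible for 0 < |s - t| < pi. *)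

definition proj_mat :: "real^'n \<Rightarrow> complex^'n^'n" where
  "proj_mat u = (\<chi> i j. complex_of_real (u$i * u$j))"

lemma hermitian_proj_mat: "hermitian_mat (proj_mat u)"
  by (simp add: hermitian_mat_def adjoint_mat_def proj_mat_def vec_eq_iff mult.commute)

lemma hermitian_one_minus_proj_mat: "hermitian_mat (mat 1 - proj_mat u)"
  by (simp add: hermitian_mat_def adjoint_mat_def proj_mat_def vec_eq_iff mult.commute mat_def)

lemma qform_proj_mat:
  "qform (proj_mat u) v = cnj (\<Sum>j\<in>UNIV. of_real (u$j) * v$j) * (\<Sum>j\<in>UNIV. of_real (u$j) * v$j)"
  by (simp add: qform_def proj_mat_def matrix_vector_mult_def sum_distrib_left sum_distrib_right
        sum_product mult_ac)

lemma qform_diff: "qform (A - B) v = qform A v - qform B v"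
  by (simp add: qform_def matrix_vector_mult_diff_rdistrib ring_distribs sum_subtractf)

lemma Re_cnj_mult_self: "Re (cnj z * z) = (Re z)^2 + (Im z)^2"
  by (simp add: power2_eq_square)

lemma psd_proj_mat: "psd (proj_mat u)"
  unfolding psd_def qform_proj_mat Re_cnj_mult_self using hermitian_proj_mat by simp

text \<open>For a unit vector \<open>u\<close>, \<open>1 - P_u\<close> is positive: splitting \<open>v = x + i y\<close> into real and
  imaginary parts, its quadratic form is \<open>|x|^2 + |y|^2 - <u,x>^2 - <u,y>^2\<close>, which is
  non-negative by Cauchy--Schwarz.\<close>
lemma psd_one_minus_proj_mat:
  fixes u :: "real^'n"
  assumes unit: "inner u u = 1"
  shows "psd (mat 1 - proj_mat u)"
proof -
  have "0 \<le> Re (qform (mat 1 - proj_mat u) v)" for v :: "complex^'n"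
  proof -
    define x :: "real^'n" where "x = (\<chi> i. Re (v$i))"
    define y :: "real^'n" where "y = (\<chi> i. Im (v$i))"
    have re: "Re (\<Sum>j\<in>UNIV. of_real (u$j) * v$j) = inner u x"
      by (simp add: x_def inner_vec_def Re_sum)
    have im: "Im (\<Sum>j\<in>UNIV. of_real (u$j) * v$j) = inner u y"
      by (simp add: y_def inner_vec_def Im_sum)
    have id: "Re (qform (mat 1) v) = inner x x + inner y y"
      by (simp add: qform_def x_def y_def inner_vec_def Re_sum sum.distrib[symmetric])
    have "Re (qform (mat 1 - proj_mat u) v) = (inner x x + inner y y) - ((inner u x)^2 + (inner u y)^2)"
      by (simp only: qform_diff minus_complex.sel id qform_proj_mat Re_cnj_mult_self re im)
    moreover have "(inner u x)^2 \<le> inner x x" "(inner u y)^2 \<le> inner y y"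
      using Cauchy_Schwarz_ineq[of u x] Cauchy_Schwarz_ineq[of u y] unit by simp_all
    ultimately show ?thesis by linarith
  qed
  then show ?thesis using hermitian_one_minus_proj_mat by (simp add: psd_def)
qed

lemma trace_proj_mat: "trace (proj_mat u) = of_real (inner u u)"
  by (simp add: trace_def proj_mat_def inner_vec_def)

lemma trace_proj_mat_mult: "trace (proj_mat u ** proj_mat w) = of_real ((inner u w)^2)"
  by (simp add: trace_def proj_mat_def inner_vec_def matrix_matrix_mult_def power2_eq_square
      sum_product mult_ac)

lemma proj_mat_density: "inner u u = 1 \<Longrightarrow> proj_mat u \<in> density_ops"
  by (simp add: density_ops_def psd_proj_mat trace_proj_mat)

lemma proj_mat_effect: "inner u u = 1 \<Longrightarrow> proj_mat u \<in> effects"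
  by (simp add: effects_def psd_proj_mat psd_one_minus_proj_mat)

definition support :: "(complex^'n^'n \<Rightarrow> 'l \<Rightarrow> real) \<Rightarrow> complex^'n^'n \<Rightarrow> 'l set" where
  "support \<mu> \<rho> = {l. 0 < \<mu> \<rho> l}"

text \<open>If an operator \<open>\<rho>\<close> is both a state and an effect with \<open>Tr(\<rho>\<rho>) = 1\<close>, then, as a
  convex combination of response values in \<open>[0,1]\<close> equals 1, the response function of the
  effect \<open>\<rho>\<close> is 1 on the support of the state \<open>\<rho>\<close>.\<close>
lemma response_one_on_support:
  fixes \<mu> :: "complex^'n^'n \<Rightarrow> 'l::finite \<Rightarrow> real"
  assumes q: "quasi_prob_rep \<mu> \<xi>" and nn: "nonneg_rep \<mu> \<xi>"
    and \<rho>: "\<rho> \<in> density_ops" "\<rho> \<in> effects" and tr: "trace (\<rho> ** \<rho>) = 1"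
    and l: "l \<in> support \<mu> \<rho>"
  shows "\<xi> \<rho> l = 1"
proof -
  have accept: "(\<Sum>l\<in>UNIV. \<mu> \<rho> l * \<xi> \<rho> l) = 1"
    using q \<rho> tr unfolding quasi_prob_rep_def by (metis of_real_eq_1_iff)
  have normed: "(\<Sum>l\<in>UNIV. \<mu> \<rho> l) = 1"
    using q \<rho> unfolding quasi_prob_rep_def by blast
  have "(\<Sum>l\<in>UNIV. \<mu> \<rho> l * (1 - \<xi> \<rho> l)) = 0"
    using accept normed by (simp add: right_diff_distrib sum_subtractf)
  moreover have "\<forall>l\<in>UNIV. 0 \<le> \<mu> \<rho> l * (1 - \<xi> \<rho> l)"
    using nn \<rho> unfolding nonneg_rep_def by simp
  ultimately have "\<mu> \<rho> l * (1 - \<xi> \<rho> l) = 0"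
    using sum_nonneg_eq_0_iff[of UNIV "\<lambda>l. \<mu> \<rho> l * (1 - \<xi> \<rho> l)"] by simp
  then show ?thesis using l by (simp add: support_def)
qed

lemma same_support_full_overlap:
  fixes \<mu> :: "complex^'n^'n \<Rightarrow> 'l::finite \<Rightarrow> real"
  assumes q: "quasi_prob_rep \<mu> \<xi>" and nn: "nonneg_rep \<mu> \<xi>"
    and \<rho>: "\<rho> \<in> density_ops" "\<rho> \<in> effects" and tr: "trace (\<rho> ** \<rho>) = 1"
    and \<sigma>: "\<sigma> \<in> density_ops" and supp: "support \<mu> \<sigma> = support \<mu> \<rho>"
  shows "trace (\<sigma> ** \<rho>) = 1"
proof -
  have absorb: "\<mu> \<sigma> l * \<xi> \<rho> l = \<mu> \<sigma> l" for l
  proof (cases "l \<in> support \<mu> \<sigma>")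
    case True
    then show ?thesis using response_one_on_support[OF q nn \<rho> tr] supp by simp
  next
    case False
    moreover have "0 \<le> \<mu> \<sigma> l" using nn \<sigma> unfolding nonneg_rep_def by blast
    ultimately have "\<mu> \<sigma> l = 0" by (simp add: support_def)
    then show ?thesis by simp
  qed
  have "(\<Sum>l\<in>UNIV. \<mu> \<sigma> l * \<xi> \<rho> l) = 1"
    using q \<sigma> unfolding quasi_prob_rep_def absorb by blast
  moreover have "trace (\<sigma> ** \<rho>) = complex_of_real (\<Sum>l\<in>UNIV. \<mu> \<sigma> l * \<xi> \<rho> l)"
    using q \<sigma> \<rho> unfolding quasi_prob_rep_def by blast
  ultimately show ?thesis by simp
qed

lemma infinite_to_finite_collision:
  fixes f :: "'a \<Rightarrow> 'b::finite"
  assumes "infinite A"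
  obtains x y where "x \<in> A" "y \<in> A" "x \<noteq> y" "f x = f y"
proof -
  have "\<not> inj_on f A"
    using assms finite_imageD[of f A] by (metis finite)
  then show ?thesis using that unfolding inj_on_def by blast
qed

lemma circle_of_unit_vectors:
  assumes "CARD('n) \<ge> 2"
  obtains u :: "real \<Rightarrow> real^'n" where "\<And>s t. inner (u s) (u t) = cos (s - t)"
proof -
  obtain a b :: 'n where ab: "a \<noteq> b"
    using assms card_le_Suc0_iff_eq[of "UNIV::'n set"] by force
  define u :: "real \<Rightarrow> real^'n" where "u t = cos t *\<^sub>R axis a 1 + sin t *\<^sub>R axis b 1" for t
  have "inner (u s) (u t) = cos (s - t)" for s t
    using ab by (simp add: u_def inner_add_left inner_add_right inner_axis_axis cos_diff)
  then show ?thesis using that by blast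
qed

lemma cos_square_less_one:
  assumes "s \<in> {0<..<1::real}" "t \<in> {0<..<1}" "s \<noteq> t"
  shows "(cos (s - t))^2 \<noteq> 1"
proof
  assume "(cos (s - t))^2 = 1"
  then have "sin (s - t) = 0" using sin_cos_squared_add[of "s - t"] by simp
  moreover have "\<bar>s - t\<bar> < pi" using assms pi_gt3 by auto
  ultimately show False using sin_zero_pi_iff assms(3) by force
qed

theorem theorem2:
  fixes \<mu> :: "complex^'n^'n \<Rightarrow> 'l::finite \<Rightarrow> real"
    and \<xi> :: "complex^'n^'n \<Rightarrow> 'l \<Rightarrow> real"
  assumes "CARD('n) \<ge> 2"
  shows "\<not> (quasi_prob_rep \<mu> \<xi> \<and> nonneg_rep \<mu> \<xi>)"
proof
  assume "quasi_prob_rep \<mu> \<xi> \<and> nonneg_rep \<mu> \<xi>"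
  then have q: "quasi_prob_rep \<mu> \<xi>" and nn: "nonneg_rep \<mu> \<xi>" by auto
  obtain u :: "real \<Rightarrow> real^'n" where uu: "\<And>s t. inner (u s) (u t) = cos (s - t)"
    using circle_of_unit_vectors[OF assms] by blast
  have unit: "inner (u t) (u t) = 1" for t using uu[of t t] by simp
  obtain s t where st: "s \<in> {0<..<1::real}" "t \<in> {0<..<1}" "s \<noteq> t"
    and same: "support \<mu> (proj_mat (u s)) = support \<mu> (proj_mat (u t))"
    using infinite_to_finite_collision[OF infinite_Ioo[of "0::real" 1],
        of "\<lambda>t. support \<mu> (proj_mat (u t))"] by auto
  have "trace (proj_mat (u s) ** proj_mat (u t)) = 1"
    by (rule same_support_full_overlap[OF q nn proj_mat_density proj_mat_effect _
          proj_mat_density same]) (simp_all add: unit trace_proj_mat_mult)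
  then have "(cos (s - t))^2 = 1"
    by (simp only: trace_proj_mat_mult uu of_real_eq_1_iff)
  then show False using cos_square_less_one[OF st] by contradiction
qed

end
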